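(* Let $n\ge 1$ and $j$ be integers with $0\le j\le n-1$. Then \[ \sum_{k=j}^{n}(-1)^{k-j}{n\brace k}{k\brack j}H_k=\left(\binom{n}{j}-1\right)\frac{B_{n-j}}{n-j}. \]
   Context: $B_m$ denotes the $m$th Bernoulli number, defined by $\frac{t}{e^t-1}=\sum_{m\ge0}B_m\frac{t^m}{m!}$ (so $B_0=1$, $B_1=-1/2$). ${k\brack j}$ denotes the (unsigned) Stirling number of the first kind, defined by $x(x+1)\cdots(x+k-1)=\sum_{j=0}^k{k\brack j}x^j$, and ${n\brace k}$ the Stirling number of the second kind, defined by $x^n=\sum_{k=0}^n(-1)^{n-k}{n\brace k}x(x+1)\cdots(x+k-1)$. $H_k=1+\frac12+\cdots+\frac1k$ is the $k$th harmonic number, $H_0=0$. *)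

theory Defs
  imports "HOL-Analysis.Analysis" "HOL-Combinatorics.Stirling"
    "HOL-Computational_Algebra.Formal_Power_Series"
begin

definition bernoulli_gf :: "real fps" where
  "bernoulli_gf = fps_X / (fps_exp 1 - 1)"

definition bernoulli :: "nat \<Rightarrow> real" where
  "bernoulli m = fact m * fps_nth bernoulli_gf m"

end

theory Submission
  imports Defs
begin

(* Work with falling factorials (x)_k. Since (x)_k = sum_j (-1)^(k-j) s(k,j) x^j, the left-hand
   side is the coefficient of x^j in P_n(x) = sum_k S(n,k) H_k (x)_k. The recurrence of S(n,k)
   together with H_(k+1) = H_k + 1/(k+1) gives P_(n+1)(x) = x P_n(x) + R_n(x), where
   R_n(x) = sum_k S(n,k) (x)_(k+1)/(k+1). As x^n = sum_k S(n,k) (x)_k, R_n is a discrete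
   antiderivative of x^n vanishing at 0, so it agrees with Faulhaber's polynomial
   (B_(n+1)(x) - B_(n+1))/(n+1) at all natural numbers, hence identically. Comparing coefficients
   gives a first-order recurrence in n for the left-hand side, solved by the closed form. *)

definition falling_fact :: "'a::comm_ring_1 \<Rightarrow> nat \<Rightarrow> 'a" where
  "falling_fact x k = (\<Prod>i<k. x - of_nat i)"

lemma falling_fact_0 [simp]: "falling_fact x 0 = 1"
  by (simp add: falling_fact_def)

lemma falling_fact_Suc: "falling_fact x (Suc k) = falling_fact x k * (x - of_nat k)"
  by (simp add: falling_fact_def)

lemma falling_fact_Suc_at_0 [simp]: "falling_fact 0 (Suc k) = 0"
  unfolding falling_fact_def by (rule prod_zero) (auto intro: bexI[of _ 0])

lemma falling_fact_plus_1_Suc: "falling_fact (x + 1) (Suc k) = (x + 1) * falling_fact x k"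
  unfolding falling_fact_def by (subst prod.lessThan_Suc_shift) simp

lemma falling_fact_Suc_diff:
  "falling_fact (x + 1) (Suc k) - falling_fact x (Suc k) = of_nat (Suc k) * falling_fact x k"
  by (simp only: falling_fact_plus_1_Suc) (simp add: falling_fact_Suc algebra_simps)

lemma mult_falling_fact: "x * falling_fact x k = falling_fact x (Suc k) + of_nat k * falling_fact x k"
  by (simp add: falling_fact_Suc algebra_simps)

lemma falling_fact_eq_pochhammer: "falling_fact x k = (-1) ^ k * pochhammer (- x) k"
  by (induction k) (simp_all add: falling_fact_Suc pochhammer_Suc algebra_simps)

lemma falling_fact_stirling:
  "falling_fact x k = (\<Sum>j\<le>k. (-1) ^ (k - j) * of_nat (stirling k j) * x ^ j)"
proof -
  have "falling_fact x k = (\<Sum>j\<le>k. (-1) ^ k * (of_nat (stirling k j) * (- x) ^ j))"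
    by (simp add: falling_fact_eq_pochhammer sum_distrib_left flip: stirling_pochhammer)
  also have "\<dots> = (\<Sum>j\<le>k. (-1) ^ (k - j) * of_nat (stirling k j) * x ^ j)"
  proof (intro sum.cong refl)
    fix j assume "j \<in> {..k}"
    then have "(-1) ^ k * (-1) ^ j = (-1 :: 'a) ^ (k - j)"
      by (auto simp: minus_one_power_iff)
    then show "(-1) ^ k * (of_nat (stirling k j) * (- x) ^ j) = (-1) ^ (k - j) * of_nat (stirling k j) * x ^ j"
      by (simp add: power_minus[of x] mult_ac)
  qed
  finally show ?thesis .
qed

lemma sum_falling_fact_coeffs:
  "(\<Sum>k\<le>n. w k * falling_fact x k)
     = (\<Sum>j\<le>n. (\<Sum>k\<le>n. w k * (-1) ^ (k - j) * of_nat (stirling k j)) * x ^ j)"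
proof -
  have "(\<Sum>k\<le>n. w k * falling_fact x k)
      = (\<Sum>k\<le>n. \<Sum>j\<le>n. w k * (-1) ^ (k - j) * of_nat (stirling k j) * x ^ j)"
  proof (intro sum.cong refl)
    fix k assume "k \<in> {..n}"
    then have "falling_fact x k = (\<Sum>j\<le>n. (-1) ^ (k - j) * of_nat (stirling k j) * x ^ j)"
      unfolding falling_fact_stirling by (intro sum.mono_neutral_left) auto
    then show "w k * falling_fact x k = (\<Sum>j\<le>n. w k * (-1) ^ (k - j) * of_nat (stirling k j) * x ^ j)"
      by (simp add: sum_distrib_left mult.assoc)
  qed
  also have "\<dots> = (\<Sum>j\<le>n. (\<Sum>k\<le>n. w k * (-1) ^ (k - j) * of_nat (stirling k j)) * x ^ j)"
    by (subst sum.swap) (simp add: sum_distrib_right)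
  finally show ?thesis .
qed

lemma sum_Stirling_Suc:
  fixes f :: "nat \<Rightarrow> 'a::comm_semiring_1"
  shows "(\<Sum>k\<le>Suc n. of_nat (Stirling (Suc n) k) * f k)
           = (\<Sum>k\<le>n. of_nat (Stirling n k) * (f (Suc k) + of_nat k * f k))"
proof -
  have "(\<Sum>k\<le>Suc n. of_nat (Stirling (Suc n) k) * f k)
      = (\<Sum>k\<le>n. of_nat (Stirling n k) * f (Suc k))
        + (\<Sum>k\<le>n. of_nat (Suc k) * of_nat (Stirling n (Suc k)) * f (Suc k))"
    by (subst sum.atMost_Suc_shift) (simp add: sum.distrib algebra_simps)
  also have "(\<Sum>k\<le>n. of_nat (Suc k) * of_nat (Stirling n (Suc k)) * f (Suc k))
      = (\<Sum>k\<le>Suc n. of_nat k * of_nat (Stirling n k) * f k)"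
    by (subst sum.atMost_Suc_shift) simp
  also have "\<dots> = (\<Sum>k\<le>n. of_nat k * of_nat (Stirling n k) * f k)"
    by simp
  finally show ?thesis
    by (simp add: sum.distrib algebra_simps)
qed

lemma power_eq_sum_Stirling_falling_fact:
  "x ^ n = (\<Sum>k\<le>n. of_nat (Stirling n k) * falling_fact x k)"
proof (induction n)
  case 0
  show ?case by simp
next
  case (Suc n)
  have "(\<Sum>k\<le>Suc n. of_nat (Stirling (Suc n) k) * falling_fact x k)
      = (\<Sum>k\<le>n. of_nat (Stirling n k) * (x * falling_fact x k))"
    by (simp only: sum_Stirling_Suc mult_falling_fact)
  also have "\<dots> = x ^ Suc n"
    by (simp add: Suc sum_distrib_left mult_ac)
  finally show ?case ..
qed

lemma polyfun_eq_if_eq_on_nats: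
  fixes c d :: "nat \<Rightarrow> 'a::{idom,real_normed_div_algebra}"
  assumes "\<And>m. (\<Sum>i\<le>N. c i * of_nat m ^ i) = (\<Sum>i\<le>N. d i * of_nat m ^ i)"
  shows "(\<Sum>i\<le>N. c i * x ^ i) = (\<Sum>i\<le>N. d i * x ^ i)"
proof -
  have "range of_nat \<subseteq> {x. (\<Sum>i\<le>N. (c i - d i) * x ^ i) = (0::'a)}"
    using assms by (auto simp: left_diff_distrib sum_subtractf)
  moreover have "infinite (range (of_nat :: nat \<Rightarrow> 'a))"
    by (intro range_inj_infinite inj_of_nat)
  ultimately have "infinite {x. (\<Sum>i\<le>N. (c i - d i) * x ^ i) = (0::'a)}"
    by (rule infinite_super)
  then have "\<forall>i\<le>N. c i = d i"
    by (simp add: polyfun_finite_roots)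
  then show ?thesis
    by simp
qed

lemma bernoulli_gf_times_exp_minus_1: "bernoulli_gf * (fps_exp 1 - 1) = fps_X"
proof -
  have subdegree: "subdegree (fps_exp 1 - 1 :: real fps) = 1"
    by (rule subdegreeI) auto
  then have "fps_exp 1 - 1 \<noteq> (0 :: real fps)"
    by (metis subdegree_0 zero_neq_one)
  then have "(fps_exp 1 - 1) dvd (fps_X :: real fps)"
    unfolding dvd_def using subdegree by (intro subdegree_le_imp_dvd_left_divring) simp_all
  then show ?thesis
    unfolding bernoulli_gf_def by (rule dvd_div_mult_self)
qed

definition bernpoly :: "nat \<Rightarrow> real \<Rightarrow> real" where
  "bernpoly n y = fact n * fps_nth (bernoulli_gf * fps_exp y) n"

lemma bernpoly_eq_sum: "bernpoly n y = (\<Sum>j\<le>n. real (n choose j) * bernoulli (n - j) * y ^ j)"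
proof -
  have "bernpoly n y = (\<Sum>j\<le>n. fact n * (y ^ j / fact j * fps_nth bernoulli_gf (n - j)))"
    unfolding bernpoly_def mult.commute[of bernoulli_gf] fps_mult_nth
    by (simp add: sum_distrib_left atLeast0AtMost)
  also have "\<dots> = (\<Sum>j\<le>n. real (n choose j) * bernoulli (n - j) * y ^ j)"
    by (intro sum.cong refl) (auto simp: binomial_fact bernoulli_def field_simps)
  finally show ?thesis .
qed

lemma bernpoly_0: "bernpoly n 0 = bernoulli n"
  by (simp add: bernpoly_def bernoulli_def)

lemma bernpoly_diff_bernoulli_eq_sum:
  "(bernpoly (Suc n) x - bernoulli (Suc n)) / real (Suc n)
     = (\<Sum>j\<le>Suc n. (if j = 0 then 0 else real (Suc n choose j) * bernoulli (Suc n - j) / real (Suc n)) * x ^ j)"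
  by (simp add: bernpoly_eq_sum sum.atMost_Suc_shift sum_divide_distrib del: sum.atMost_Suc)

lemma bernpoly_plus_1_diff: "bernpoly (Suc n) (y + 1) - bernpoly (Suc n) y = real (Suc n) * y ^ n"
proof -
  have "bernoulli_gf * fps_exp (y + 1) - bernoulli_gf * fps_exp y = fps_X * fps_exp y"
    by (simp add: fps_exp_add_mult algebra_simps flip: bernoulli_gf_times_exp_minus_1)
  then have "bernpoly (Suc n) (y + 1) - bernpoly (Suc n) y = fact (Suc n) * fps_nth (fps_X * fps_exp y) (Suc n)"
    unfolding bernpoly_def by (metis fps_sub_nth right_diff_distrib)
  also have "\<dots> = real (Suc n) * y ^ n"
    by (simp del: of_nat_Suc)
  finally show ?thesis .
qed

lemma sum_powers_eq_bernpoly: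
  "(\<Sum>i<m. real i ^ n) = (bernpoly (Suc n) (real m) - bernoulli (Suc n)) / real (Suc n)"
proof (induction m)
  case 0
  show ?case by (simp add: bernpoly_0)
next
  case (Suc m)
  then show ?case
    using bernpoly_plus_1_diff[of n "real m"] by (simp add: field_simps)
qed

definition power_sum_poly :: "nat \<Rightarrow> real \<Rightarrow> real" where
  "power_sum_poly n x = (\<Sum>k\<le>n. real (Stirling n k) * falling_fact x (Suc k) / real (Suc k))"

lemma power_sum_poly_plus_1_diff: "power_sum_poly n (x + 1) - power_sum_poly n x = x ^ n"
proof -
  have "power_sum_poly n (x + 1) - power_sum_poly n x
      = (\<Sum>k\<le>n. real (Stirling n k) * ((falling_fact (x + 1) (Suc k) - falling_fact x (Suc k)) / real (Suc k)))"
    by (simp add: power_sum_poly_def sum_subtractf diff_divide_distrib algebra_simps del: of_nat_Suc)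
  also have "\<dots> = (\<Sum>k\<le>n. real (Stirling n k) * falling_fact x k)"
    by (simp add: falling_fact_Suc_diff del: of_nat_Suc)
  finally show ?thesis
    by (simp flip: power_eq_sum_Stirling_falling_fact)
qed

lemma power_sum_poly_of_nat: "power_sum_poly n (real m) = (\<Sum>i<m. real i ^ n)"
proof (induction m)
  case 0
  show ?case by (simp add: power_sum_poly_def)
next
  case (Suc m)
  then show ?case
    using power_sum_poly_plus_1_diff[of n "real m"] by (simp add: algebra_simps)
qed

lemma power_sum_poly_eq_bernpoly:
  "power_sum_poly n x = (bernpoly (Suc n) x - bernoulli (Suc n)) / real (Suc n)"
proof -
  define w where "w k = (if k = 0 then 0 else real (Stirling n (k - 1)) / real k)" for k
  have "power_sum_poly n y = (\<Sum>k\<le>Suc n. w k * falling_fact y k)" for y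
    unfolding power_sum_poly_def w_def by (subst sum.atMost_Suc_shift) (simp del: of_nat_Suc)
  then have poly: "power_sum_poly n y
      = (\<Sum>j\<le>Suc n. (\<Sum>k\<le>Suc n. w k * (-1) ^ (k - j) * real (stirling k j)) * y ^ j)" for y
    by (simp add: sum_falling_fact_coeffs)
  have "power_sum_poly n (real m) = (bernpoly (Suc n) (real m) - bernoulli (Suc n)) / real (Suc n)" for m
    by (simp add: power_sum_poly_of_nat sum_powers_eq_bernpoly)
  then show ?thesis
    unfolding poly bernpoly_diff_bernoulli_eq_sum by (rule polyfun_eq_if_eq_on_nats)
qed

definition stirling_harm_poly :: "nat \<Rightarrow> real \<Rightarrow> real" where
  "stirling_harm_poly n x = (\<Sum>k\<le>n. real (Stirling n k) * harm k * falling_fact x k)"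

definition stirling_harm_coeff :: "nat \<Rightarrow> nat \<Rightarrow> real" where
  "stirling_harm_coeff n j = (\<Sum>k\<le>n. (-1) ^ (k - j) * real (Stirling n k) * real (stirling k j) * harm k)"

lemma stirling_harm_poly_eq_sum: "stirling_harm_poly n x = (\<Sum>j\<le>n. stirling_harm_coeff n j * x ^ j)"
  unfolding stirling_harm_poly_def stirling_harm_coeff_def sum_falling_fact_coeffs
  by (simp add: mult_ac)

lemma stirling_harm_poly_Suc:
  "stirling_harm_poly (Suc n) x = x * stirling_harm_poly n x + power_sum_poly n x"
proof -
  have "stirling_harm_poly (Suc n) x = (\<Sum>k\<le>n. real (Stirling n k) *
          (harm (Suc k) * falling_fact x (Suc k) + real k * (harm k * falling_fact x k)))"
    unfolding stirling_harm_poly_def using sum_Stirling_Suc[where f = "\<lambda>k. harm k * falling_fact x k"]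
    by (simp add: mult.assoc)
  also have "\<dots> = (\<Sum>k\<le>n. real (Stirling n k) *
          (harm k * (x * falling_fact x k) + falling_fact x (Suc k) / real (Suc k)))"
    unfolding mult_falling_fact harm_Suc by (simp add: field_simps)
  also have "\<dots> = x * stirling_harm_poly n x + power_sum_poly n x"
    by (simp add: stirling_harm_poly_def power_sum_poly_def sum.distrib sum_distrib_left algebra_simps)
  finally show ?thesis .
qed

lemma stirling_harm_coeff_0: "stirling_harm_coeff n 0 = 0"
  by (auto simp: stirling_harm_coeff_def intro!: sum.neutral) (metis harm_expand(1) neq0_conv stirling_0)

lemma stirling_harm_coeff_Suc:
  assumes "j \<le> n"
  shows "stirling_harm_coeff (Suc n) (Suc j)
           = stirling_harm_coeff n j + real (Suc n choose Suc j) * bernoulli (n - j) / real (Suc n)"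
proof -
  define c where "c i = (if i = 0 then 0 else stirling_harm_coeff n (i - 1))
      + (if i = 0 then 0 else real (Suc n choose i) * bernoulli (Suc n - i) / real (Suc n))" for i
  have "(\<Sum>i\<le>Suc n. stirling_harm_coeff (Suc n) i * x ^ i) = (\<Sum>i\<le>Suc n. c i * x ^ i)" for x
  proof -
    have shifted: "x * stirling_harm_poly n x
        = (\<Sum>i\<le>Suc n. (if i = 0 then 0 else stirling_harm_coeff n (i - 1)) * x ^ i)"
      by (simp add: stirling_harm_poly_eq_sum sum.atMost_Suc_shift sum_distrib_left mult_ac
          del: sum.atMost_Suc)
    have "(\<Sum>i\<le>Suc n. stirling_harm_coeff (Suc n) i * x ^ i) = x * stirling_harm_poly n x + power_sum_poly n x"
      by (simp add: stirling_harm_poly_Suc flip: stirling_harm_poly_eq_sum)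
    also have "\<dots> = (\<Sum>i\<le>Suc n. c i * x ^ i)"
      unfolding shifted power_sum_poly_eq_bernpoly bernpoly_diff_bernoulli_eq_sum c_def
      by (simp add: distrib_right sum.distrib)
    finally show ?thesis .
  qed
  then have "\<forall>i\<le>Suc n. stirling_harm_coeff (Suc n) i = c i"
    by (subst polyfun_eq_coeffs[symmetric]) blast
  then have "stirling_harm_coeff (Suc n) (Suc j) = c (Suc j)"
    using assms by simp
  then show ?thesis
    by (simp add: c_def)
qed

lemma stirling_harm_coeff_eq:
  "j < n \<Longrightarrow> stirling_harm_coeff n j = (real (n choose j) - 1) * bernoulli (n - j) / real (n - j)"
proof (induction n arbitrary: j)
  case 0
  then show ?case by simp
next
  case (Suc n)
  show ?case
  proof (cases j)
    case 0
    then show ?thesis by (simp add: stirling_harm_coeff_0)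
  next
    case (Suc i)
    with Suc.prems have "i < n" by simp
    have "real (Suc i) * real (Suc n choose Suc i) = real (Suc n) * real (n choose i)"
      by (metis Suc_times_binomial_eq mult.commute of_nat_mult)
    then have "real (Suc n choose Suc i) / real (Suc n)
        = (real (Suc n choose Suc i) - real (n choose i)) / real (n - i)"
      using \<open>i < n\<close> by (simp add: field_simps of_nat_diff)
    then have step: "(real (n choose i) - 1) / real (n - i) + real (Suc n choose Suc i) / real (Suc n)
        = (real (Suc n choose Suc i) - 1) / real (n - i)"
      by (simp add: add_divide_distrib[symmetric] diff_divide_distrib)
    have "stirling_harm_coeff (Suc n) (Suc i)
        = ((real (n choose i) - 1) / real (n - i) + real (Suc n choose Suc i) / real (Suc n)) * bernoulli (n - i)"
      using \<open>i < n\<close> by (simp add: stirling_harm_coeff_Suc Suc.IH field_simps del: of_nat_Suc)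
    then show ?thesis
      unfolding step using Suc by simp
  qed
qed

theorem mainTheorem1:
  fixes n j :: nat
  assumes "n \<ge> 1" and "j \<le> n - 1"
  shows "(\<Sum>k=j..n. (-1) ^ (k - j) * real (Stirling n k) * real (stirling k j) * harm k)
         = (real (n choose j) - 1) * bernoulli (n - j) / real (n - j)"
proof -
  have "(\<Sum>k=j..n. (-1) ^ (k - j) * real (Stirling n k) * real (stirling k j) * harm k)
      = stirling_harm_coeff n j"
    unfolding stirling_harm_coeff_def by (rule sum.mono_neutral_left) auto
  also have "\<dots> = (real (n choose j) - 1) * bernoulli (n - j) / real (n - j)"
    using assms by (intro stirling_harm_coeff_eq) simp
  finally show ?thesis .
qed

end
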